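(* A compact Hausdorff space $X$ belongs to the class $\mathcal A$ if and only if $X$ is scattered and hereditarily paracompact.
   Context: A topological space is scattered if each nonempty subspace has an isolated point. For a locally compact Hausdorff space $Y$, an Aleksandrov compactification of $Y$ is a compactification $\overline Y$ of $Y$ with $|\overline Y\setminus Y|\le 1$. The class $\mathcal A$ is the smallest class of compact spaces that contains the empty space and the one-point space and is closed under taking the Aleksandrov compactification of a topological sum $\bigoplus_{i\in I}K_i$ of any family $\{K_i\}_{i\in I}$ of spaces from $\mathcal A$. *)

theory Defs
  imports "HOL-Analysis.Analysis"
begin

definition scattered_space :: "'a topology \<Rightarrow> bool" where
  "scattered_space X \<longleftrightarrow>
     (\<forall>S. S \<subseteq> topspace X \<and> S \<noteq> {} \<longrightarrow> (\<exists>x\<in>S. openin (subtopology X S) {x}))"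

definition paracompact_space :: "'a topology \<Rightarrow> bool" where
  "paracompact_space X \<longleftrightarrow>
     (\<forall>\<U>. (\<forall>U\<in>\<U>. openin X U) \<and> \<Union>\<U> = topspace X \<longrightarrow>
        (\<exists>\<V>. (\<forall>V\<in>\<V>. openin X V) \<and> \<Union>\<V> = topspace X \<and>
             (\<forall>V\<in>\<V>. \<exists>U\<in>\<U>. V \<subseteq> U) \<and> locally_finite_in X \<V>))"

definition hereditarily_paracompact_space :: "'a topology \<Rightarrow> bool" where
  "hereditarily_paracompact_space X \<longleftrightarrow>
     (\<forall>S. S \<subseteq> topspace X \<longrightarrow> paracompact_space (subtopology X S))"

text \<open>The class A, rendered intrinsically (up to homeomorphism): X is in A iff X is empty,
  a single point, or X is a (Hausdorff) compactification of an open dense subspace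
  Y = topspace X - P with at most one remaining point, where Y is the topological sum of
  the pairwise disjoint open pieces U in a family, each piece (as a subspace) in A.\<close>
inductive classA :: "'a topology \<Rightarrow> bool" where
  empty: "topspace X = {} \<Longrightarrow> classA X"
| point: "topspace X = {a} \<Longrightarrow> classA X"
| alex: "\<lbrakk>compact_space X; Hausdorff_space X;
          P \<subseteq> topspace X; P = {} \<or> (\<exists>p. P = {p});
          X closure_of (topspace X - P) = topspace X;
          \<Union>\<U> = topspace X - P; pairwise disjnt \<U>;
          \<forall>U\<in>\<U>. openin X U \<and> classA (subtopology X U)\<rbrakk> \<Longrightarrow> classA X"

end

theory Submission
  imports Defs
begin

text \<open>
  Scatteredness passes to a space covered, up to one
  point, by open scattered subspaces.  For hereditary paracompactness, a subspace \<open>S\<close> of an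
  Aleksandrov compactification is, minus the added point, a topological sum of paracompact
  pieces, hence paracompact; and a regular space that is paracompact after removing one closed
  point is paracompact.

  A compact Hausdorff scattered space is zero-dimensional, and \<open>\<A>\<close> is
  closed under clopen subspaces.  The second part of the file shows that, in a compact
  zero-dimensional space, a cover of an open paracompact subspace by clopen sets has a
  refinement partitioning it into clopen sets (take a locally finite refinement, swell it to a
  clopen one using compactness of closures, and make it disjoint by a well-ordering).  Hence if
  all points of such a subspace have clopen neighbourhoods in \<open>\<A>\<close>, it is a sum of clopen members
  of \<open>\<A>\<close>.  Now every point has a clopen neighbourhood in \<open>\<A>\<close>: otherwise an isolated bad point \<open>b\<close>
  has a clopen neighbourhood \<open>N\<close> whose other points are good, and then \<open>N\<close> is the Aleksandrov
  compactification of the sum obtained from \<open>N - {b}\<close>.  Applying the partition to the whole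
  space finishes the proof.
\<close>

lemma scattered_space_subsingleton:
  assumes "topspace X \<subseteq> {a}"
  shows "scattered_space X"
  unfolding scattered_space_def
proof (intro allI impI)
  fix S assume S: "S \<subseteq> topspace X \<and> S \<noteq> {}"
  then have "S = {a}" using assms by auto
  then show "\<exists>x\<in>S. openin (subtopology X S) {x}"
    using S by (metis inf.absorb_iff2 insertI1 openin_topspace topspace_subtopology)
qed

lemma paracompact_space_finite:
  assumes "finite (topspace X)"
  shows "paracompact_space X"
  unfolding paracompact_space_def
proof (intro allI impI)
  fix \<U> assume \<U>: "(\<forall>U\<in>\<U>. openin X U) \<and> \<Union>\<U> = topspace X"
  then have "\<U> \<subseteq> Pow (topspace X)" by auto
  then have "finite \<U>" using assms by (simp add: finite_subset)
  then show "\<exists>\<V>. (\<forall>V\<in>\<V>. openin X V) \<and> \<Union>\<V> = topspace X \<and>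
             (\<forall>V\<in>\<V>. \<exists>U\<in>\<U>. V \<subseteq> U) \<and> locally_finite_in X \<V>"
    using \<U> by (intro exI[of _ \<U>]) (auto intro: finite_imp_locally_finite_in)
qed

lemma hereditarily_paracompact_space_finite:
  "finite (topspace X) \<Longrightarrow> hereditarily_paracompact_space X"
  unfolding hereditarily_paracompact_space_def
  by (auto intro!: paracompact_space_finite)

lemma scattered_space_open_cover_but_point:
  assumes P: "P = {} \<or> (\<exists>p. P = {p})" and cov: "topspace X - P \<subseteq> \<Union>\<U>"
    and \<U>: "\<And>U. U \<in> \<U> \<Longrightarrow> openin X U \<and> scattered_space (subtopology X U)"
  shows "scattered_space X"
  unfolding scattered_space_def
proof (intro allI impI)
  fix S assume S: "S \<subseteq> topspace X \<and> S \<noteq> {}"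
  show "\<exists>x\<in>S. openin (subtopology X S) {x}"
  proof (cases "S \<subseteq> P")
    case True
    then obtain p where p: "S = {p}" using P S by auto
    then show ?thesis using S by (metis insertI1 openin_topspace topspace_subtopology_subset)
  next
    case False
    then obtain U x where U: "U \<in> \<U>" and x: "x \<in> S" "x \<in> U" using S cov by blast
    have oU: "openin X U" and sU: "scattered_space (subtopology X U)" using \<U>[OF U] by auto
    have "S \<inter> U \<subseteq> topspace (subtopology X U)" "S \<inter> U \<noteq> {}"
      using S x openin_subset[OF oU] by auto
    then obtain y where y: "y \<in> S \<inter> U" "openin (subtopology (subtopology X U) (S \<inter> U)) {y}"
      using sU unfolding scattered_space_def by blast
    have "subtopology (subtopology X U) (S \<inter> U) = subtopology (subtopology X S) (S \<inter> U)"
      by (simp add: subtopology_subtopology Int_ac)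
    moreover have "openin (subtopology X S) (S \<inter> U)"
      using oU by (simp add: openin_subtopology_Int2)
    ultimately have "openin (subtopology X S) {y}" using y openin_trans_full by metis
    then show ?thesis using y by blast
  qed
qed

lemma paracompact_space_subtopology_refinement:
  assumes pc: "paracompact_space (subtopology X S)"
    and \<W>: "\<And>W. W \<in> \<W> \<Longrightarrow> openin X W" and cov: "S \<subseteq> \<Union>\<W>"
  shows "\<exists>\<V>. (\<forall>V\<in>\<V>. openin (subtopology X S) V) \<and> \<Union>\<V> = topspace X \<inter> S \<and>
             (\<forall>V\<in>\<V>. \<exists>W\<in>\<W>. V \<subseteq> W) \<and> locally_finite_in (subtopology X S) \<V>"
proof -
  let ?\<W> = "(\<lambda>W. W \<inter> S) ` \<W>"
  have "W \<subseteq> topspace X" if "W \<in> \<W>" for W using \<W>[OF that] by (rule openin_subset)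
  then have "\<Union>?\<W> = topspace (subtopology X S)" using cov by auto
  moreover have "openin (subtopology X S) (W \<inter> S)" if "W \<in> \<W>" for W
    using \<W>[OF that] by (rule openin_subtopology_Int)
  ultimately have "(\<forall>A\<in>?\<W>. openin (subtopology X S) A) \<and> \<Union>?\<W> = topspace (subtopology X S)"
    by blast
  from pc[unfolded paracompact_space_def, rule_format, OF this]
  obtain \<V> where V: "\<forall>V\<in>\<V>. openin (subtopology X S) V" "\<Union>\<V> = topspace (subtopology X S)"
      "\<forall>V\<in>\<V>. \<exists>A\<in>?\<W>. V \<subseteq> A" "locally_finite_in (subtopology X S) \<V>"
    by (elim exE conjE)
  have "\<forall>V\<in>\<V>. \<exists>W\<in>\<W>. V \<subseteq> W"
  proof
    fix V assume "V \<in> \<V>"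
    then obtain W where "W \<in> \<W>" "V \<subseteq> W \<inter> S" using V(3) by blast
    then show "\<exists>W\<in>\<W>. V \<subseteq> W" by blast
  qed
  then show ?thesis using V(1,2,4) by (intro exI[of _ \<V>]) simp
qed

text \<open>Families that are locally finite on the pieces of a partition of \<open>X\<close> into open sets
  combine to a locally finite family in \<open>X\<close>: a small neighbourhood inside one piece meets no
  member of the families living on the other pieces.\<close>

lemma locally_finite_in_disjoint_open_union:
  assumes cov: "\<Union>\<U> = topspace X" and disj: "pairwise disjnt \<U>"
    and \<U>_open: "\<And>U. U \<in> \<U> \<Longrightarrow> openin X U"
    and f_sub: "\<And>U V. U \<in> \<U> \<Longrightarrow> V \<in> f U \<Longrightarrow> V \<subseteq> U"
    and f_lf: "\<And>U. U \<in> \<U> \<Longrightarrow> locally_finite_in (subtopology X U) (f U)"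
  shows "locally_finite_in X (\<Union>(f ` \<U>))"
  unfolding locally_finite_in_def
proof (intro conjI ballI)
  show "\<Union>(\<Union>(f ` \<U>)) \<subseteq> topspace X" using f_sub cov by blast
  fix x assume x: "x \<in> topspace X"
  then obtain U where U: "U \<in> \<U>" "x \<in> U" using cov by blast
  then have "x \<in> topspace (subtopology X U)" using x by simp
  then obtain M where M: "openin (subtopology X U) M" "x \<in> M" "finite {V \<in> f U. V \<inter> M \<noteq> {}}"
    using f_lf[OF U(1)] unfolding locally_finite_in_def by blast
  have MU: "M \<subseteq> U" using M(1) openin_subset by fastforce
  have "{V \<in> \<Union>(f ` \<U>). V \<inter> M \<noteq> {}} \<subseteq> {V \<in> f U. V \<inter> M \<noteq> {}}"
  proof clarify
    fix U' V assume U': "U' \<in> \<U>" "V \<in> f U'" "V \<inter> M \<noteq> {}"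
    then have "U' \<inter> U \<noteq> {}" using f_sub MU by blast
    then have "U' = U" using disj U'(1) U(1) unfolding pairwise_def disjnt_def by blast
    then show "V \<in> f U" using U' by simp
  qed
  then have "finite {V \<in> \<Union>(f ` \<U>). V \<inter> M \<noteq> {}}" using M(3) finite_subset by blast
  moreover have "openin X M" using M(1) \<U>_open[OF U(1)] openin_trans_full by blast
  ultimately show "\<exists>M. openin X M \<and> x \<in> M \<and> finite {V \<in> \<Union>(f ` \<U>). V \<inter> M \<noteq> {}}"
    using M(2) by blast
qed

text \<open>Topological sums: a space partitioned into open paracompact pieces is paracompact.
  Refine the cover separately on each piece and collect the refinements.\<close>

lemma paracompact_space_disjoint_open_union:
  assumes cov: "\<Union>\<U> = topspace X" and disj: "pairwise disjnt \<U>"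
    and \<U>: "\<And>U. U \<in> \<U> \<Longrightarrow> openin X U \<and> paracompact_space (subtopology X U)"
  shows "paracompact_space X"
  unfolding paracompact_space_def
proof (intro allI impI)
  fix \<W> assume \<W>: "(\<forall>W\<in>\<W>. openin X W) \<and> \<Union>\<W> = topspace X"
  have "\<forall>U\<in>\<U>. \<exists>\<V>. (\<forall>V\<in>\<V>. openin (subtopology X U) V) \<and> \<Union>\<V> = topspace X \<inter> U \<and>
            (\<forall>V\<in>\<V>. \<exists>W\<in>\<W>. V \<subseteq> W) \<and> locally_finite_in (subtopology X U) \<V>"
  proof
    fix U assume U: "U \<in> \<U>"
    have "paracompact_space (subtopology X U)" using \<U>[OF U] by blast
    moreover have "\<And>W. W \<in> \<W> \<Longrightarrow> openin X W" using \<W> by blast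
    moreover have "U \<subseteq> \<Union>\<W>" using openin_subset[of X U] \<U>[OF U] \<W> by auto
    ultimately show "\<exists>\<V>. (\<forall>V\<in>\<V>. openin (subtopology X U) V) \<and> \<Union>\<V> = topspace X \<inter> U \<and>
            (\<forall>V\<in>\<V>. \<exists>W\<in>\<W>. V \<subseteq> W) \<and> locally_finite_in (subtopology X U) \<V>"
      by (rule paracompact_space_subtopology_refinement)
  qed
  then obtain f where f: "\<forall>U\<in>\<U>. (\<forall>V\<in>f U. openin (subtopology X U) V) \<and> \<Union>(f U) = topspace X \<inter> U \<and>
            (\<forall>V\<in>f U. \<exists>W\<in>\<W>. V \<subseteq> W) \<and> locally_finite_in (subtopology X U) (f U)"
    by (elim bchoice[elim_format] exE)
  have f_open: "openin X V" if "U \<in> \<U>" "V \<in> f U" for U V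
  proof -
    have "openin (subtopology X U) V" using f that by simp
    then show ?thesis using \<U>[OF that(1)] openin_trans_full by blast
  qed
  have f_refines: "\<exists>W\<in>\<W>. V \<subseteq> W" if "U \<in> \<U>" "V \<in> f U" for U V
    using f that by simp
  have f_cover: "\<Union>(f U) = U" if "U \<in> \<U>" for U
    using f that cov by auto
  have "locally_finite_in X (\<Union>(f ` \<U>))"
  proof (rule locally_finite_in_disjoint_open_union[OF cov disj])
    show "\<And>U. U \<in> \<U> \<Longrightarrow> openin X U" using \<U> by blast
    show "\<And>U V. U \<in> \<U> \<Longrightarrow> V \<in> f U \<Longrightarrow> V \<subseteq> U" using f_cover by blast
    show "\<And>U. U \<in> \<U> \<Longrightarrow> locally_finite_in (subtopology X U) (f U)" using f by simp
  qed
  moreover have "\<Union>(\<Union>(f ` \<U>)) = (\<Union>U\<in>\<U>. \<Union>(f U))" by blast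
  then have "\<Union>(\<Union>(f ` \<U>)) = topspace X" using f_cover cov by simp
  ultimately show "\<exists>\<V>. (\<forall>V\<in>\<V>. openin X V) \<and> \<Union>\<V> = topspace X \<and>
             (\<forall>V\<in>\<V>. \<exists>W\<in>\<W>. V \<subseteq> W) \<and> locally_finite_in X \<V>"
    using f_open f_refines by (intro exI[of _ "\<Union>(f ` \<U>)"]) blast
qed

lemma locally_finite_in_insert_outside_open:
  assumes Y: "openin X Y" and lf: "locally_finite_in (subtopology X Y) \<V>"
    and G: "openin X G" "topspace X - Y \<subseteq> G" and W0: "W0 \<subseteq> topspace X"
  shows "locally_finite_in X (insert W0 {V \<in> \<V>. V \<inter> G = {}})"
  unfolding locally_finite_in_def
proof (intro conjI ballI)
  have "\<Union>\<V> \<subseteq> topspace X" using lf unfolding locally_finite_in_def by auto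
  then show "\<Union>(insert W0 {V \<in> \<V>. V \<inter> G = {}}) \<subseteq> topspace X" using W0 by blast
  fix x assume x: "x \<in> topspace X"
  show "\<exists>M. openin X M \<and> x \<in> M \<and> finite {V \<in> insert W0 {V \<in> \<V>. V \<inter> G = {}}. V \<inter> M \<noteq> {}}"
  proof (cases "x \<in> Y")
    case False
    have "{V \<in> insert W0 {V \<in> \<V>. V \<inter> G = {}}. V \<inter> G \<noteq> {}} \<subseteq> {W0}" by blast
    then have "finite {V \<in> insert W0 {V \<in> \<V>. V \<inter> G = {}}. V \<inter> G \<noteq> {}}"
      by (rule finite_subset) simp
    then show ?thesis using False x G by blast
  next
    case True
    then have "x \<in> topspace (subtopology X Y)" using x by simp
    then obtain M where M: "openin (subtopology X Y) M" "x \<in> M" "finite {V \<in> \<V>. V \<inter> M \<noteq> {}}"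
      using lf unfolding locally_finite_in_def by blast
    have "{V \<in> insert W0 {V \<in> \<V>. V \<inter> G = {}}. V \<inter> M \<noteq> {}} \<subseteq> insert W0 {V \<in> \<V>. V \<inter> M \<noteq> {}}"
      by blast
    then have "finite {V \<in> insert W0 {V \<in> \<V>. V \<inter> G = {}}. V \<inter> M \<noteq> {}}"
      by (rule finite_subset) (simp add: M(3))
    moreover have "openin X M" using M(1) Y by (rule openin_trans_full)
    ultimately show ?thesis using M(2) by blast
  qed
qed

lemma paracompact_space_refinement_avoiding:
  assumes pc: "paracompact_space (subtopology X Y)"
    and \<W>: "\<And>W. W \<in> \<W> \<Longrightarrow> openin X W" and cov: "Y \<subseteq> \<Union>\<W>"
    and W0: "W0 \<in> \<W>" and K: "closedin X K" "K \<subseteq> W0"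
  shows "\<exists>\<V>. (\<forall>V\<in>\<V>. openin (subtopology X Y) V) \<and> \<Union>\<V> = topspace X \<inter> Y \<and>
             (\<forall>V\<in>\<V>. V \<subseteq> W0 \<or> (\<exists>W\<in>\<W>. V \<subseteq> W - K)) \<and> locally_finite_in (subtopology X Y) \<V>"
proof -
  define \<W>' where "\<W>' = insert W0 ((\<lambda>W. W - K) ` \<W>)"
  have W'_open: "openin X A" if A: "A \<in> \<W>'" for A
  proof (cases "A = W0")
    case False
    then obtain W where "W \<in> \<W>" "A = W - K" using A unfolding \<W>'_def by blast
    then show ?thesis using \<W> K(1) by (simp add: openin_diff)
  qed (use \<W> W0 in blast)
  have "Y \<subseteq> \<Union>\<W>'"
  proof
    fix x assume "x \<in> Y"
    then obtain W where "W \<in> \<W>" "x \<in> W" using cov by blast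
    then show "x \<in> \<Union>\<W>'" using K(2) unfolding \<W>'_def by blast
  qed
  with pc W'_open have "\<exists>\<V>. (\<forall>V\<in>\<V>. openin (subtopology X Y) V) \<and> \<Union>\<V> = topspace X \<inter> Y \<and>
             (\<forall>V\<in>\<V>. \<exists>A\<in>\<W>'. V \<subseteq> A) \<and> locally_finite_in (subtopology X Y) \<V>"
    by (rule paracompact_space_subtopology_refinement)
  then obtain \<V> where V: "\<forall>V\<in>\<V>. openin (subtopology X Y) V" "\<Union>\<V> = topspace X \<inter> Y"
      "\<forall>V\<in>\<V>. \<exists>A\<in>\<W>'. V \<subseteq> A" "locally_finite_in (subtopology X Y) \<V>"
    by (elim exE conjE)
  have "\<forall>V\<in>\<V>. V \<subseteq> W0 \<or> (\<exists>W\<in>\<W>. V \<subseteq> W - K)"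
  proof
    fix V assume "V \<in> \<V>"
    then obtain A where "A \<in> \<W>'" "V \<subseteq> A" using V(3) by blast
    then show "V \<subseteq> W0 \<or> (\<exists>W\<in>\<W>. V \<subseteq> W - K)" unfolding \<W>'_def by blast
  qed
  then show ?thesis using V(1,2,4) by (intro exI[of _ \<V>]) simp
qed

lemma refinement_discard_meeting:
  assumes V_refines: "\<And>V. V \<in> \<V> \<Longrightarrow> V \<subseteq> W0 \<or> (\<exists>W\<in>\<W>. V \<subseteq> W - K)"
    and W0: "W0 \<in> \<W>" and GK: "G \<subseteq> K"
  shows "\<Union>\<V> \<subseteq> \<Union>(insert W0 {V \<in> \<V>. V \<inter> G = {}})"
    and "\<And>V. V \<in> insert W0 {V \<in> \<V>. V \<inter> G = {}} \<Longrightarrow> \<exists>W\<in>\<W>. V \<subseteq> W"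
proof -
  have "V \<subseteq> W0 \<or> V \<inter> G = {}" if "V \<in> \<V>" for V
    using V_refines[OF that] GK by blast
  then show "\<Union>\<V> \<subseteq> \<Union>(insert W0 {V \<in> \<V>. V \<inter> G = {}})" by blast
next
  fix V assume V: "V \<in> insert W0 {V \<in> \<V>. V \<inter> G = {}}"
  show "\<exists>W\<in>\<W>. V \<subseteq> W"
  proof (cases "V = W0")
    case False
    then have "V \<subseteq> W0 \<or> (\<exists>W\<in>\<W>. V \<subseteq> W - K)" using V V_refines by blast
    then show ?thesis using W0 by blast
  qed (use W0 in blast)
qed

text \<open>Take a member \<open>W\<^sub>0\<close> of the cover containing \<open>p\<close> and open \<open>G\<close>, closed
  \<open>K\<close> with \<open>p \<in> G \<subseteq> K \<subseteq> W\<^sub>0\<close>.  Refine, away from \<open>p\<close>, the cover by \<open>W\<^sub>0\<close> and the sets \<open>W - K\<close>,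
  discard the refining sets meeting \<open>G\<close> and add \<open>W\<^sub>0\<close>.\<close>

lemma paracompact_space_insert_point:
  assumes reg: "regular_space X" and p: "p \<in> topspace X" "closedin X {p}"
    and pc: "paracompact_space (subtopology X (topspace X - {p}))"
  shows "paracompact_space X"
  unfolding paracompact_space_def
proof (intro allI impI)
  fix \<W> assume \<W>: "(\<forall>W\<in>\<W>. openin X W) \<and> \<Union>\<W> = topspace X"
  let ?Y = "topspace X - {p}"
  obtain W0 where W0: "W0 \<in> \<W>" "p \<in> W0" using \<W> p(1) by blast
  have "openin X W0" using \<W> W0(1) by blast
  moreover have "neighbourhood_base_of (closedin X) X"
    using reg by (simp add: neighbourhood_base_of_closedin)
  ultimately obtain G K where GK: "openin X G" "closedin X K" "p \<in> G" "G \<subseteq> K" "K \<subseteq> W0"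
    using W0(2) unfolding neighbourhood_base_of by meson
  have "?Y \<subseteq> \<Union>\<W>" using \<W> by blast
  moreover have "\<And>W. W \<in> \<W> \<Longrightarrow> openin X W" using \<W> by blast
  ultimately have "\<exists>\<V>. (\<forall>V\<in>\<V>. openin (subtopology X ?Y) V) \<and> \<Union>\<V> = topspace X \<inter> ?Y \<and>
             (\<forall>V\<in>\<V>. V \<subseteq> W0 \<or> (\<exists>W\<in>\<W>. V \<subseteq> W - K)) \<and> locally_finite_in (subtopology X ?Y) \<V>"
    using pc W0(1) GK(2,5) by (intro paracompact_space_refinement_avoiding) auto
  then obtain \<V> where V_open: "\<forall>V\<in>\<V>. openin (subtopology X ?Y) V"
      and V_cover: "\<Union>\<V> = topspace X \<inter> ?Y"
      and V_sides: "\<forall>V\<in>\<V>. V \<subseteq> W0 \<or> (\<exists>W\<in>\<W>. V \<subseteq> W - K)"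
      and V_lf: "locally_finite_in (subtopology X ?Y) \<V>"
    by (elim exE conjE)
  have V_refines: "V \<subseteq> W0 \<or> (\<exists>W\<in>\<W>. V \<subseteq> W - K)" if "V \<in> \<V>" for V
    using V_sides that by blast
  have Y_open: "openin X ?Y" using p(2) by blast
  define \<F> where "\<F> = insert W0 {V \<in> \<V>. V \<inter> G = {}}"
  have F_open: "openin X V" if V: "V \<in> \<F>" for V
  proof (cases "V = W0")
    case False
    then have "openin (subtopology X ?Y) V" using V V_open unfolding \<F>_def by blast
    then show ?thesis using Y_open by (rule openin_trans_full)
  qed (use \<open>openin X W0\<close> in simp)
  have F_refines: "\<exists>W\<in>\<W>. V \<subseteq> W" if "V \<in> \<F>" for V
    using V_refines W0(1) GK(4) that unfolding \<F>_def by (rule refinement_discard_meeting(2))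
  have "\<Union>\<F> = topspace X"
  proof
    show "\<Union>\<F> \<subseteq> topspace X" using F_open openin_subset by (metis Union_least)
    have "\<Union>\<V> \<subseteq> \<Union>\<F>"
      using V_refines W0(1) GK(4) unfolding \<F>_def by (rule refinement_discard_meeting(1))
    moreover have "p \<in> \<Union>\<F>" using W0(2) unfolding \<F>_def by blast
    moreover have "topspace X = insert p (\<Union>\<V>)" using V_cover p(1) by auto
    ultimately show "topspace X \<subseteq> \<Union>\<F>" by simp
  qed
  moreover have "locally_finite_in X \<F>"
    unfolding \<F>_def using Y_open V_lf GK(1,3) openin_subset[OF \<open>openin X W0\<close>]
    by (intro locally_finite_in_insert_outside_open) auto
  ultimately show "\<exists>\<V>. (\<forall>V\<in>\<V>. openin X V) \<and> \<Union>\<V> = topspace X \<and>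
             (\<forall>V\<in>\<V>. \<exists>W\<in>\<W>. V \<subseteq> W) \<and> locally_finite_in X \<V>"
    using F_open F_refines by (intro exI[of _ \<F>]) blast
qed

text \<open>The Aleksandrov compactification of a topological sum of hereditarily paracompact spaces
  is hereditarily paracompact: a subspace \<open>S\<close> minus the added point is a topological sum of
  paracompact pieces, and the added point is handled by regularity.\<close>

lemma hereditarily_paracompact_space_Aleksandrov:
  assumes X: "compact_space X" "Hausdorff_space X"
    and P: "P = {} \<or> (\<exists>p. P = {p})" and cov: "\<Union>\<U> = topspace X - P" and disj: "pairwise disjnt \<U>"
    and \<U>: "\<And>U. U \<in> \<U> \<Longrightarrow> openin X U \<and> hereditarily_paracompact_space (subtopology X U)"
  shows "hereditarily_paracompact_space X"
  unfolding hereditarily_paracompact_space_def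
proof (intro allI impI)
  fix S assume S: "S \<subseteq> topspace X"
  let ?T = "subtopology X (S - P)"
  have "paracompact_space ?T"
  proof (rule paracompact_space_disjoint_open_union)
    show "\<Union>((\<lambda>U. S \<inter> U) ` \<U>) = topspace ?T" using S cov by auto
    show "pairwise disjnt ((\<lambda>U. S \<inter> U) ` \<U>)"
      using disj unfolding pairwise_def disjnt_def by blast
    fix A assume "A \<in> (\<lambda>U. S \<inter> U) ` \<U>"
    then obtain U where U: "U \<in> \<U>" "A = S \<inter> U" by blast
    have "A = U \<inter> (S - P)" using U cov by blast
    then have "openin ?T A" using \<U>[OF U(1)] openin_subtopology_Int by blast
    have "A \<subseteq> topspace (subtopology X U)" using U(2) S by auto
    then have "paracompact_space (subtopology (subtopology X U) A)"
      using \<U>[OF U(1)] unfolding hereditarily_paracompact_space_def by blast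
    moreover have "subtopology (subtopology X U) A = subtopology ?T A"
      using \<open>A = U \<inter> (S - P)\<close> by (simp add: subtopology_subtopology Int_ac)
    ultimately show "openin ?T A \<and> paracompact_space (subtopology ?T A)"
      using \<open>openin ?T A\<close> by simp
  qed
  show "paracompact_space (subtopology X S)"
  proof (cases "P \<inter> S = {}")
    case True
    then show ?thesis using \<open>paracompact_space ?T\<close> by (simp add: Diff_triv Int_commute)
  next
    case False
    then obtain p where p: "P = {p}" "p \<in> S" using P by auto
    show ?thesis
    proof (rule paracompact_space_insert_point)
      show "regular_space (subtopology X S)"
        using X by (simp add: compact_Hausdorff_imp_regular_space regular_space_subtopology)
      show "p \<in> topspace (subtopology X S)" using p S by auto
      then show "closedin (subtopology X S) {p}"
        using X(2) Hausdorff_space_subtopology Hausdorff_imp_t1_space closedin_t1_singleton by metis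
      show "paracompact_space (subtopology (subtopology X S) (topspace (subtopology X S) - {p}))"
        using \<open>paracompact_space ?T\<close> p S by (simp add: subtopology_subtopology Int_absorb1)
    qed
  qed
qed

lemma classA_imp_scattered_hereditarily_paracompact:
  assumes "classA X"
  shows "scattered_space X \<and> hereditarily_paracompact_space X"
  using assms
proof (induction rule: classA.induct)
  case (empty X)
  then show ?case
    by (auto intro: scattered_space_subsingleton hereditarily_paracompact_space_finite)
next
  case (point X a)
  then show ?case
    using scattered_space_subsingleton[of X a] hereditarily_paracompact_space_finite[of X] by simp
next
  case (alex X P \<U>)
  show ?case
  proof
    show "scattered_space X"
      using alex.hyps(4,6) alex.IH by (intro scattered_space_open_cover_but_point[of P X \<U>]) auto
    show "hereditarily_paracompact_space X"
      using alex.hyps(1,2,4,6,7) alex.IH by (intro hereditarily_paracompact_space_Aleksandrov) auto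
  qed
qed

lemma closure_of_open_subtopology_dense:
  assumes C: "openin X C" and dense: "X closure_of S = topspace X"
  shows "subtopology X C closure_of (C \<inter> S) = C"
proof -
  have "C \<subseteq> X closure_of (C \<inter> S)"
    using openin_Int_closure_of_subset[OF C, of S] dense openin_subset[OF C] by auto
  then show ?thesis using closure_of_subtopology_open[OF disjI1, OF C] by blast
qed

text \<open>\<open>\<A>\<close> is closed under passing to clopen subspaces: intersect the added point and every
  piece of the sum with the clopen set.\<close>

lemma classA_clopen:
  assumes "classA X" "closedin X C" "openin X C"
  shows "classA (subtopology X C)"
  using assms
proof (induction arbitrary: C rule: classA.induct)
  case (empty X)
  then show ?case by (intro classA.empty) auto
next
  case (point X a)
  then have "C = {} \<or> C = {a}" using closedin_subset by fastforce
  then show ?case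
    using point by (auto intro: classA.empty classA.point[of _ a])
next
  case (alex X P \<U>)
  let ?Z = "subtopology X C"
  have CX: "C \<subseteq> topspace X" using alex.prems(1) closedin_subset by blast
  then have tZ: "topspace ?Z - P \<inter> C = C \<inter> (topspace X - P)" by auto
  show ?case
  proof (rule classA.alex[where P = "P \<inter> C" and \<U> = "(\<lambda>U. U \<inter> C) ` \<U>"])
    show "compact_space ?Z"
      using alex.hyps(1) alex.prems(1) closedin_compact_space compact_space_subtopology by blast
    show "Hausdorff_space ?Z" using alex.hyps(2) Hausdorff_space_subtopology by blast
    show "P \<inter> C \<subseteq> topspace ?Z" using alex.hyps(3) by auto
    show "P \<inter> C = {} \<or> (\<exists>p. P \<inter> C = {p})" using alex.hyps(4) by blast
    show "?Z closure_of (topspace ?Z - P \<inter> C) = topspace ?Z"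
      using closure_of_open_subtopology_dense[OF alex.prems(2) alex.hyps(5)] CX tZ
      by (simp add: Int_absorb1)
    show "\<Union>((\<lambda>U. U \<inter> C) ` \<U>) = topspace ?Z - P \<inter> C" using alex.hyps(6) tZ by auto
    show "pairwise disjnt ((\<lambda>U. U \<inter> C) ` \<U>)"
      using alex.hyps(7) unfolding pairwise_def disjnt_def by blast
    show "\<forall>V\<in>(\<lambda>U. U \<inter> C) ` \<U>. openin ?Z V \<and> classA (subtopology ?Z V)"
    proof
      fix V assume "V \<in> (\<lambda>U. U \<inter> C) ` \<U>"
      then obtain U where U: "U \<in> \<U>" "V = U \<inter> C" by blast
      have "openin X U" using alex.IH U by blast
      then have "openin ?Z V" using U(2) openin_subtopology_Int by blast
      have "closedin (subtopology X U) (U \<inter> C)"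
        using alex.prems(1) closedin_subtopology_Int_closed by (metis inf_commute)
      moreover have "openin (subtopology X U) (U \<inter> C)"
        using alex.prems(2) openin_subtopology_Int2 by blast
      ultimately have "classA (subtopology (subtopology X U) (U \<inter> C))"
        using alex.IH U by blast
      moreover have "subtopology (subtopology X U) (U \<inter> C) = subtopology ?Z V"
        using U by (simp add: subtopology_subtopology Int_ac)
      ultimately show "openin ?Z V \<and> classA (subtopology ?Z V)" using \<open>openin ?Z V\<close> by simp
    qed
  qed
qed

lemma classA_clopen_subset:
  assumes "classA (subtopology X C)" "closedin X D" "openin X D" "D \<subseteq> C"
  shows "classA (subtopology X D)"
proof -
  have "closedin (subtopology X C) D" using assms(2,4) by (rule closedin_subset_topspace)
  moreover have "openin (subtopology X C) D" using assms(3,4) unfolding openin_subtopology by blast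
  ultimately have "classA (subtopology (subtopology X C) D)" using assms(1) classA_clopen by blast
  then show ?thesis using assms(4) by (simp add: subtopology_subtopology inf_absorb2)
qed

definition zero_dimensional_space :: "'a topology \<Rightarrow> bool" where
  "zero_dimensional_space X \<longleftrightarrow>
     (\<forall>U x. openin X U \<and> x \<in> U \<longrightarrow> (\<exists>C. closedin X C \<and> openin X C \<and> x \<in> C \<and> C \<subseteq> U))"

text \<open>In a \<open>T\<^sub>1\<close> scattered space the connected components are points: a component has a point
  isolated in it, and that point is clopen in the component.\<close>

lemma scattered_space_connected_component:
  assumes T1: "t1_space X" and sc: "scattered_space X" and x: "x \<in> topspace X"
  shows "connected_component_of_set X x = {x}"
proof -
  let ?K = "connected_component_of_set X x"
  have Kx: "x \<in> ?K" using x by (simp add: connected_component_of_refl)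
  have KX: "?K \<subseteq> topspace X" by (rule connected_component_of_subset_topspace)
  then have "?K \<subseteq> topspace X \<and> ?K \<noteq> {}" using Kx by blast
  then obtain y where y: "y \<in> ?K" "openin (subtopology X ?K) {y}"
    using sc[unfolded scattered_space_def, rule_format, of ?K] by blast
  have "y \<in> topspace X" using y(1) KX by blast
  with T1 have "closedin X {y}" by (rule closedin_t1_singleton)
  then have "closedin (subtopology X ?K) {y}" using y(1) by (simp add: closedin_subset_topspace)
  moreover have "connectedin (subtopology X ?K) ?K"
    by (simp add: connectedin_subtopology connectedin_connected_component_of)
  ultimately have "?K \<subseteq> {y} \<or> disjnt ?K {y}" using connectedin_clopen_cases y(2) by metis
  then show ?thesis using y(1) Kx by (auto simp: disjnt_def)
qed

text \<open>A compact Hausdorff scattered space is zero-dimensional, since in a compact Hausdorff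
  space a point component is separated from any disjoint closed set by a clopen set.\<close>

lemma compact_scattered_imp_zero_dimensional:
  assumes X: "compact_space X" "Hausdorff_space X" "scattered_space X"
  shows "zero_dimensional_space X"
  unfolding zero_dimensional_space_def
proof (intro allI impI, elim conjE)
  fix U x assume U: "openin X U" "x \<in> U"
  have x: "x \<in> topspace X" using U openin_subset by blast
  have "connected_component_of_set X x = {x}"
    using Hausdorff_imp_t1_space[OF X(2)] X(3) x by (rule scattered_space_connected_component)
  then have "{x} \<in> connected_components_of X"
    using x connected_component_in_connected_components_of by metis
  moreover have "locally_compact_space X" using X(1) compact_imp_locally_compact_space by blast
  moreover have "compactin X {x}" using x by simp
  moreover have "closedin X (topspace X - U)" using U by blast
  moreover have "disjnt {x} (topspace X - U)" using U by (simp add: disjnt_def)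
  ultimately have "separated_between X {x} (topspace X - U)"
    using separated_between_compact_connected_component X(2) by blast
  then obtain C where C: "closedin X C" "openin X C" "{x} \<subseteq> C" "topspace X - U \<subseteq> topspace X - C"
    unfolding separated_between by blast
  have "C \<subseteq> U" using C(2,4) openin_subset by blast
  then show "\<exists>C. closedin X C \<and> openin X C \<and> x \<in> C \<and> C \<subseteq> U" using C by blast
qed

text \<open>In a zero-dimensional space a compact set lies in a clopen set inside any open superset:
  cover it by finitely many clopen neighbourhoods.\<close>

lemma compactin_clopen_between:
  assumes zd: "zero_dimensional_space X" and K: "compactin X K" and U: "openin X U" "K \<subseteq> U"
  shows "\<exists>H. closedin X H \<and> openin X H \<and> K \<subseteq> H \<and> H \<subseteq> U"
proof -
  have "\<forall>x\<in>K. \<exists>C. closedin X C \<and> openin X C \<and> x \<in> C \<and> C \<subseteq> U"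
    using zd U unfolding zero_dimensional_space_def by blast
  then obtain c where c: "\<forall>x\<in>K. closedin X (c x) \<and> openin X (c x) \<and> x \<in> c x \<and> c x \<subseteq> U"
    by (elim bchoice[elim_format] exE)
  have "(\<forall>V\<in>c ` K. openin X V) \<and> K \<subseteq> \<Union>(c ` K)" using c by blast
  then obtain F where F: "finite F" "F \<subseteq> c ` K" "K \<subseteq> \<Union>F"
    using K unfolding compactin_def by meson
  have "closedin X (\<Union>F)" using F c by (intro closedin_Union) auto
  moreover have "openin X (\<Union>F)" using F c by (intro openin_Union) auto
  moreover have "\<Union>F \<subseteq> U" using F c by blast
  ultimately show ?thesis using F(3) by blast
qed

lemma locally_finite_in_compact_finite:
  assumes lf: "locally_finite_in T \<A>" and K: "compactin T K"
  shows "finite {A\<in>\<A>. T closure_of A \<inter> K \<noteq> {}}"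
proof -
  have KT: "K \<subseteq> topspace T" using K compactin_subset_topspace by blast
  have "\<forall>x\<in>K. \<exists>N. openin T N \<and> x \<in> N \<and> finite {A\<in>\<A>. A \<inter> N \<noteq> {}}"
    using lf KT unfolding locally_finite_in_def by blast
  then have "\<exists>N. \<forall>x\<in>K. openin T (N x) \<and> x \<in> N x \<and> finite {A\<in>\<A>. A \<inter> N x \<noteq> {}}" by (rule bchoice)
  then obtain N where N: "\<forall>x\<in>K. openin T (N x) \<and> x \<in> N x \<and> finite {A\<in>\<A>. A \<inter> N x \<noteq> {}}"
    ..
  have "(\<forall>U\<in>N ` K. openin T U) \<and> K \<subseteq> \<Union>(N ` K)" using N by blast
  then obtain F where F: "finite F" "F \<subseteq> N ` K" "K \<subseteq> \<Union>F"
    using K unfolding compactin_def by meson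
  then obtain K' where K': "K' \<subseteq> K" "finite K'" "F = N ` K'" using finite_subset_image by metis
  have "{A\<in>\<A>. T closure_of A \<inter> K \<noteq> {}} \<subseteq> (\<Union>x\<in>K'. {A\<in>\<A>. A \<inter> N x \<noteq> {}})"
  proof
    fix A assume A: "A \<in> {A\<in>\<A>. T closure_of A \<inter> K \<noteq> {}}"
    then obtain z where z: "z \<in> T closure_of A" "z \<in> K" by blast
    then obtain x where x: "x \<in> K'" "z \<in> N x" using F(3) K'(3) by blast
    have "openin T (N x)" using N x K' by blast
    then have "A \<inter> N x \<noteq> {}" using openin_Int_closure_of_eq_empty z x by blast
    then show "A \<in> (\<Union>x\<in>K'. {A\<in>\<A>. A \<inter> N x \<noteq> {}})" using A x by blast
  qed
  moreover have "finite (\<Union>x\<in>K'. {A\<in>\<A>. A \<inter> N x \<noteq> {}})"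
    using K' N by blast
  ultimately show ?thesis using finite_subset by blast
qed

text \<open>A locally finite clopen cover can be made disjoint: well-order it and remove from each member
  the union of its predecessors, which is clopen by local finiteness.\<close>

lemma locally_finite_clopen_cover_disjoint:
  assumes lf: "locally_finite_in Y \<C>" and clo: "\<forall>C\<in>\<C>. closedin Y C \<and> openin Y C"
    and cov: "\<Union>\<C> = topspace Y"
  shows "\<exists>\<D>. pairwise disjnt \<D> \<and> \<Union>\<D> = topspace Y \<and>
              (\<forall>D\<in>\<D>. closedin Y D \<and> openin Y D \<and> (\<exists>C\<in>\<C>. D \<subseteq> C))"
proof -
  obtain r where r: "well_order_on \<C> r" using well_order_on by blast
  have tot: "total_on \<C> r" and wf: "wf (r - Id)"
    using r unfolding well_order_on_def linear_order_on_def by auto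
  define pred where "pred C = \<Union>{C'\<in>\<C>. (C', C) \<in> r \<and> C' \<noteq> C}" for C
  define D where "D C = C - pred C" for C
  have "pairwise disjnt (D ` \<C>)"
    unfolding pairwise_def
  proof clarify
    fix C1 C2 assume C: "C1 \<in> \<C>" "C2 \<in> \<C>" "D C1 \<noteq> D C2"
    then have "C1 \<noteq> C2" by auto
    then have "(C1, C2) \<in> r \<or> (C2, C1) \<in> r" using tot C unfolding total_on_def by blast
    then show "disjnt (D C1) (D C2)"
    proof
      assume "(C1, C2) \<in> r"
      then show ?thesis using C \<open>C1 \<noteq> C2\<close> unfolding D_def pred_def disjnt_def by blast
    next
      assume "(C2, C1) \<in> r"
      then show ?thesis using C \<open>C1 \<noteq> C2\<close> unfolding D_def pred_def disjnt_def by blast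
    qed
  qed
  moreover have "\<Union>(D ` \<C>) = topspace Y"
  proof
    show "\<Union>(D ` \<C>) \<subseteq> topspace Y" using cov unfolding D_def by blast
    show "topspace Y \<subseteq> \<Union>(D ` \<C>)"
    proof
      fix x assume "x \<in> topspace Y"
      then obtain C0 where "C0 \<in> {C\<in>\<C>. x \<in> C}" using cov by blast
      text \<open>The first member of the cover containing \<open>x\<close> keeps \<open>x\<close>.\<close>
      then have "\<exists>z\<in>{C\<in>\<C>. x \<in> C}. \<forall>y. (y, z) \<in> r - Id \<longrightarrow> y \<notin> {C\<in>\<C>. x \<in> C}"
        by (rule wf_eq_minimal[THEN iffD1, OF wf, rule_format])
      then obtain z where z: "z \<in> {C\<in>\<C>. x \<in> C}" "\<And>y. (y, z) \<in> r - Id \<Longrightarrow> y \<notin> {C\<in>\<C>. x \<in> C}"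
        by blast
      then have "x \<in> D z" unfolding D_def pred_def by blast
      then show "x \<in> \<Union>(D ` \<C>)" using z(1) by blast
    qed
  qed
  moreover have "closedin Y (D C) \<and> openin Y (D C) \<and> (\<exists>C'\<in>\<C>. D C \<subseteq> C')" if C: "C \<in> \<C>" for C
  proof -
    have "openin Y (pred C)" using clo unfolding pred_def by (intro openin_Union) blast
    moreover have "closedin Y (pred C)"
      using clo unfolding pred_def
      by (intro closedin_locally_finite_Union locally_finite_in_subset[OF lf]) auto
    moreover have "closedin Y C" "openin Y C" using clo C by blast+
    ultimately show ?thesis
      unfolding D_def using C by (blast intro: closedin_diff openin_diff)
  qed
  ultimately show ?thesis by (intro exI[of _ "D ` \<C>"]) auto
qed

lemma locally_finite_in_swelling:
  assumes lf: "locally_finite_in T \<V>" and cov: "\<Union>\<V> = topspace T"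
    and cpt: "\<And>V. V \<in> \<V> \<Longrightarrow> compactin T (T closure_of V)"
    and h_sub: "\<And>V. V \<in> \<V> \<Longrightarrow> h V \<subseteq> topspace T"
    and h_meets: "\<And>V W. V \<in> \<V> \<Longrightarrow> W \<in> \<V> \<Longrightarrow> h V \<inter> W \<noteq> {} \<Longrightarrow>
                    T closure_of V \<inter> T closure_of W \<noteq> {}"
  shows "locally_finite_in T (h ` \<V>)"
  unfolding locally_finite_in_def
proof (intro conjI ballI)
  show "\<Union>(h ` \<V>) \<subseteq> topspace T" using h_sub by blast
  fix y assume "y \<in> topspace T"
  then obtain M where M: "openin T M" "y \<in> M" "finite {W \<in> \<V>. W \<inter> M \<noteq> {}}"
    using lf unfolding locally_finite_in_def by blast
  let ?F = "{W \<in> \<V>. W \<inter> M \<noteq> {}}"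
  have "{V \<in> \<V>. h V \<inter> M \<noteq> {}} \<subseteq> (\<Union>W\<in>?F. {V \<in> \<V>. T closure_of V \<inter> T closure_of W \<noteq> {}})"
  proof
    fix V assume "V \<in> {V \<in> \<V>. h V \<inter> M \<noteq> {}}"
    then obtain z where V: "V \<in> \<V>" and z: "z \<in> h V" "z \<in> M" by blast
    then obtain W where W: "W \<in> \<V>" "z \<in> W" using h_sub cov by blast
    then have "W \<in> ?F" using z(2) by blast
    moreover have "T closure_of V \<inter> T closure_of W \<noteq> {}" using h_meets V W z(1) by blast
    ultimately show "V \<in> (\<Union>W\<in>?F. {V \<in> \<V>. T closure_of V \<inter> T closure_of W \<noteq> {}})"
      using V by blast
  qed
  moreover have "finite (\<Union>W\<in>?F. {V \<in> \<V>. T closure_of V \<inter> T closure_of W \<noteq> {}})"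
    using M(3) cpt locally_finite_in_compact_finite[OF lf] by blast
  ultimately have "finite {V \<in> \<V>. h V \<inter> M \<noteq> {}}" by (rule finite_subset)
  then have "finite (h ` {V \<in> \<V>. h V \<inter> M \<noteq> {}})" by blast
  moreover have "{A \<in> h ` \<V>. A \<inter> M \<noteq> {}} \<subseteq> h ` {V \<in> \<V>. h V \<inter> M \<noteq> {}}" by blast
  ultimately have "finite {A \<in> h ` \<V>. A \<inter> M \<noteq> {}}" using finite_subset by blast
  then show "\<exists>M. openin T M \<and> y \<in> M \<and> finite {A \<in> h ` \<V>. A \<inter> M \<noteq> {}}" using M(1,2) by blast
qed

lemma locally_finite_in_openin_diff_closures:
  assumes "locally_finite_in T \<V>"
  shows "openin T (topspace T - \<Union>{T closure_of W | W. W \<in> \<V> \<and> Q W})"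
proof -
  have "locally_finite_in T {T closure_of W | W. W \<in> \<V> \<and> Q W}"
    by (rule locally_finite_in_subset[OF locally_finite_in_closure[OF assms]]) blast
  then have "closedin T (\<Union>{T closure_of W | W. W \<in> \<V> \<and> Q W})"
    by (rule closedin_locally_finite_Union[rotated]) (auto simp: closedin_closure_of)
  then show ?thesis by (rule openin_diff[OF openin_topspace])
qed

lemma closure_of_inside_closed:
  assumes Y: "openin X Y" and G: "closedin X G" "G \<subseteq> Y" and V: "V \<subseteq> G"
  shows "X closure_of V \<subseteq> G" and "subtopology X Y closure_of V = X closure_of V"
proof -
  show "X closure_of V \<subseteq> G" using V G(1) by (rule closure_of_minimal)
  then show "subtopology X Y closure_of V = X closure_of V"
    using closure_of_subtopology_open[OF disjI1, OF Y] G(2) by blast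
qed

lemma compactin_closure_of_inside_closed:
  assumes comp: "compact_space X" and Y: "openin X Y"
    and G: "closedin X G" "G \<subseteq> Y" and V: "V \<subseteq> G"
  shows "compactin (subtopology X Y) (subtopology X Y closure_of V)"
proof -
  have "X closure_of V \<subseteq> Y" "subtopology X Y closure_of V = X closure_of V"
    using closure_of_inside_closed[OF Y G V] G(2) by auto
  moreover have "compactin X (X closure_of V)"
    using comp closedin_compact_space closedin_closure_of by blast
  ultimately show ?thesis by (simp add: compactin_subtopology)
qed

text \<open>Take \<open>H\<close> between the compact closure of \<open>V\<close> and the open set
  obtained by removing from \<open>G\<close> all closures disjoint from it.\<close>

lemma clopen_swelling:
  assumes comp: "compact_space X" and zd: "zero_dimensional_space X" and Y: "openin X Y"
    and lf: "locally_finite_in (subtopology X Y) \<V>"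
    and G: "closedin X G" "openin X G" "G \<subseteq> Y" and V: "V \<subseteq> G"
  shows "\<exists>H. closedin X H \<and> openin X H \<and> V \<subseteq> H \<and> H \<subseteq> G \<and>
             (\<forall>W\<in>\<V>. H \<inter> W \<noteq> {} \<longrightarrow>
                subtopology X Y closure_of V \<inter> subtopology X Y closure_of W \<noteq> {})"
proof -
  let ?T = "subtopology X Y"
  let ?cl = "\<lambda>V. ?T closure_of V"
  have tT: "topspace ?T = Y" using Y openin_subset by auto
  have cl_V: "X closure_of V \<subseteq> G" "?cl V = X closure_of V"
    using closure_of_inside_closed[OF Y G(1,3) V] by blast+
  define Sw where "Sw = topspace ?T - \<Union>{?cl W | W. W \<in> \<V> \<and> ?cl W \<inter> ?cl V = {}}"
  have "openin ?T Sw" unfolding Sw_def by (rule locally_finite_in_openin_diff_closures[OF lf])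
  then have "openin X Sw" using Y by (rule openin_trans_full)
  then have "openin X (Sw \<inter> G)" using G(2) by blast
  moreover have "compactin X (X closure_of V)"
    using comp closedin_compact_space closedin_closure_of by blast
  moreover have "X closure_of V \<subseteq> Sw \<inter> G"
    using cl_V G(3) tT unfolding Sw_def by auto
  ultimately obtain H where H: "closedin X H" "openin X H" "X closure_of V \<subseteq> H" "H \<subseteq> Sw \<inter> G"
    using compactin_clopen_between[OF zd] by metis
  have "V \<subseteq> X closure_of V"
    using V G(2) openin_subset closure_of_subset by (metis order_trans)
  moreover have "?cl V \<inter> ?cl W \<noteq> {}" if W: "W \<in> \<V>" "H \<inter> W \<noteq> {}" for W
  proof -
    have "W \<subseteq> topspace ?T" using lf W(1) unfolding locally_finite_in_def by blast
    then have "W \<subseteq> ?cl W" by (rule closure_of_subset)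
    then show ?thesis using W H(4) unfolding Sw_def by blast
  qed
  ultimately show ?thesis using H by blast
qed

lemma locally_finite_clopen_refinement:
  assumes comp: "compact_space X" and zd: "zero_dimensional_space X" and Y: "openin X Y"
    and lf: "locally_finite_in (subtopology X Y) \<V>" and cov: "\<Union>\<V> = Y"
    and \<G>: "\<And>G. G \<in> \<G> \<Longrightarrow> closedin X G \<and> openin X G \<and> G \<subseteq> Y"
    and refines: "\<And>V. V \<in> \<V> \<Longrightarrow> \<exists>G\<in>\<G>. V \<subseteq> G"
  shows "\<exists>\<H>. locally_finite_in (subtopology X Y) \<H> \<and> \<Union>\<H> = Y \<and>
              (\<forall>H\<in>\<H>. closedin X H \<and> openin X H \<and> (\<exists>G\<in>\<G>. H \<subseteq> G))"
proof -
  let ?T = "subtopology X Y"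
  let ?cl = "\<lambda>V. ?T closure_of V"
  have tT: "topspace ?T = Y" using Y openin_subset by auto
  have "\<forall>V\<in>\<V>. \<exists>H. closedin X H \<and> openin X H \<and> V \<subseteq> H \<and> (\<exists>G\<in>\<G>. H \<subseteq> G) \<and>
                   (\<forall>W\<in>\<V>. H \<inter> W \<noteq> {} \<longrightarrow> ?cl V \<inter> ?cl W \<noteq> {})"
  proof
    fix V assume "V \<in> \<V>"
    then obtain G where G: "G \<in> \<G>" "V \<subseteq> G" using refines by blast
    have "closedin X G" "openin X G" "G \<subseteq> Y" using \<G>[OF G(1)] by blast+
    from clopen_swelling[OF comp zd Y lf this G(2)]
    obtain H where "closedin X H" "openin X H" "V \<subseteq> H" "H \<subseteq> G"
        "\<forall>W\<in>\<V>. H \<inter> W \<noteq> {} \<longrightarrow> ?cl V \<inter> ?cl W \<noteq> {}"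
      by (elim exE conjE)
    with G(1) show "\<exists>H. closedin X H \<and> openin X H \<and> V \<subseteq> H \<and> (\<exists>G\<in>\<G>. H \<subseteq> G) \<and>
                   (\<forall>W\<in>\<V>. H \<inter> W \<noteq> {} \<longrightarrow> ?cl V \<inter> ?cl W \<noteq> {})"
      by (intro exI[of _ H]) blast
  qed
  then obtain h where h: "\<forall>V\<in>\<V>. closedin X (h V) \<and> openin X (h V) \<and> V \<subseteq> h V \<and>
                   (\<exists>G\<in>\<G>. h V \<subseteq> G) \<and> (\<forall>W\<in>\<V>. h V \<inter> W \<noteq> {} \<longrightarrow> ?cl V \<inter> ?cl W \<noteq> {})"
    by (elim bchoice[elim_format] exE)
  have h_V: "V \<subseteq> h V" and h_G: "\<exists>G\<in>\<G>. h V \<subseteq> G"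
    and h_meets: "\<And>W. W \<in> \<V> \<Longrightarrow> h V \<inter> W \<noteq> {} \<Longrightarrow> ?cl V \<inter> ?cl W \<noteq> {}" if "V \<in> \<V>" for V
    using h that by simp_all
  have h_sub: "h V \<subseteq> topspace ?T" if V: "V \<in> \<V>" for V
  proof -
    obtain G where "G \<in> \<G>" "h V \<subseteq> G" using h_G[OF V] by blast
    then show ?thesis using \<G> tT by blast
  qed
  have cl_cpt: "compactin ?T (?cl V)" if V: "V \<in> \<V>" for V
  proof -
    obtain G where G: "G \<in> \<G>" "V \<subseteq> G" using refines V by blast
    then show ?thesis using comp Y \<G>[OF G(1)] by (blast intro: compactin_closure_of_inside_closed)
  qed
  have "locally_finite_in ?T (h ` \<V>)"
  proof (rule locally_finite_in_swelling[OF lf])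
    show "\<Union>\<V> = topspace ?T" using cov tT by simp
    show "\<And>V. V \<in> \<V> \<Longrightarrow> compactin ?T (?cl V)" by (rule cl_cpt)
    show "\<And>V. V \<in> \<V> \<Longrightarrow> h V \<subseteq> topspace ?T" by (rule h_sub)
    show "\<And>V W. V \<in> \<V> \<Longrightarrow> W \<in> \<V> \<Longrightarrow> h V \<inter> W \<noteq> {} \<Longrightarrow> ?cl V \<inter> ?cl W \<noteq> {}"
      by (rule h_meets)
  qed
  moreover have "\<Union>(h ` \<V>) = Y"
  proof
    show "\<Union>(h ` \<V>) \<subseteq> Y" using h_sub tT by blast
    show "Y \<subseteq> \<Union>(h ` \<V>)" using h_V cov by blast
  qed
  moreover have "\<forall>H\<in>h ` \<V>. closedin X H \<and> openin X H \<and> (\<exists>G\<in>\<G>. H \<subseteq> G)"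
    using h h_G by simp
  ultimately show ?thesis by blast
qed

text \<open>A compact Hausdorff space that is a topological sum of members of \<open>\<A>\<close> after removing one
  point \<open>b\<close> belongs to \<open>\<A>\<close>: it is the Aleksandrov compactification of that sum, or, when \<open>b\<close> is
  isolated, the sum of it with the point \<open>{b}\<close>.\<close>

lemma classA_sum_insert_point:
  assumes X: "compact_space X" "Hausdorff_space X" and b: "b \<in> topspace X"
    and cov: "\<Union>\<U> = topspace X - {b}" and disj: "pairwise disjnt \<U>"
    and \<U>: "\<And>U. U \<in> \<U> \<Longrightarrow> openin X U \<and> classA (subtopology X U)"
  shows "classA X"
proof (cases "b \<in> X closure_of (topspace X - {b})")
  case True
  have "X closure_of (topspace X - {b}) = topspace X"
    using True closure_of_subset[of "topspace X - {b}" X] closure_of_subset_topspace by fastforce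
  moreover have "\<forall>U\<in>\<U>. openin X U \<and> classA (subtopology X U)" using \<U> by blast
  ultimately show ?thesis
    using b cov disj by (intro classA.alex[OF X, where P = "{b}" and \<U> = \<U>]) auto
next
  case False
  have "X closure_of (topspace X - {b}) \<subseteq> topspace X - {b}"
    using False closure_of_subset_topspace by fastforce
  then have "closedin X (topspace X - {b})"
    using closure_of_subset_eq by blast
  then have b_open: "openin X {b}" using b by (simp add: closedin_def Diff_Diff_Int)
  have b_classA: "classA (subtopology X {b})" using b by (intro classA.point[of _ b]) auto
  have "b \<notin> \<Union>\<U>" using cov by blast
  then have "pairwise disjnt (insert {b} \<U>)"
    using disj by (auto simp: pairwise_insert disjnt_def)
  moreover have "\<Union>(insert {b} \<U>) = topspace X - {}" using cov b by auto
  moreover have "\<forall>U\<in>insert {b} \<U>. openin X U \<and> classA (subtopology X U)"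
    using \<U> b_open b_classA by blast
  ultimately show ?thesis
    by (intro classA.alex[OF X, where P = "{}"]) auto
qed

lemma clopen_classA_cover:
  assumes zd: "zero_dimensional_space X" and Y: "openin X Y"
    and loc: "\<And>y. y \<in> Y \<Longrightarrow> \<exists>C. closedin X C \<and> openin X C \<and> y \<in> C \<and> classA (subtopology X C)"
  shows "Y \<subseteq> \<Union>{G. closedin X G \<and> openin X G \<and> G \<subseteq> Y \<and> classA (subtopology X G)}"
proof
  fix y assume y: "y \<in> Y"
  then obtain C where C: "closedin X C" "openin X C" "y \<in> C" "classA (subtopology X C)"
    using loc by blast
  have "openin X (C \<inter> Y)" using C(2) Y by blast
  then obtain C' where C': "closedin X C'" "openin X C'" "y \<in> C'" "C' \<subseteq> C \<inter> Y"
    using zd C(3) y unfolding zero_dimensional_space_def by blast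
  then have "classA (subtopology X C')" using classA_clopen_subset[OF C(4)] by blast
  then show "y \<in> \<Union>{G. closedin X G \<and> openin X G \<and> G \<subseteq> Y \<and> classA (subtopology X G)}"
    using C' by blast
qed

lemma clopen_in_open_subtopology_inside_closed:
  assumes Y: "openin X Y" and G: "closedin X G" "G \<subseteq> Y" and D: "D \<subseteq> G"
    and clopen: "closedin (subtopology X Y) D" "openin (subtopology X Y) D"
  shows "closedin X D" "openin X D"
proof -
  show "openin X D" using clopen(2) Y by (rule openin_trans_full)
  obtain F where F: "closedin X F" "D = F \<inter> Y" using clopen(1) unfolding closedin_subtopology by blast
  then have "D = F \<inter> G" using G(2) D by blast
  then show "closedin X D" using F(1) G(1) by (simp add: closedin_Int)
qed

text \<open>In a compact zero-dimensional space, every cover of an open paracompact subspace \<open>Y\<close> by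
  clopen subsets of \<open>Y\<close> has a refinement that partitions \<open>Y\<close> into clopen sets: take a locally
  finite refinement, make it clopen and then disjoint.\<close>

lemma clopen_partition_refinement:
  assumes comp: "compact_space X" and zd: "zero_dimensional_space X"
    and Y: "openin X Y" and pc: "paracompact_space (subtopology X Y)"
    and \<G>: "\<And>G. G \<in> \<G> \<Longrightarrow> closedin X G \<and> openin X G \<and> G \<subseteq> Y" and cov: "Y \<subseteq> \<Union>\<G>"
  shows "\<exists>\<D>. pairwise disjnt \<D> \<and> \<Union>\<D> = Y \<and>
              (\<forall>D\<in>\<D>. closedin X D \<and> openin X D \<and> (\<exists>G\<in>\<G>. D \<subseteq> G))"
proof -
  let ?T = "subtopology X Y"
  have tT: "topspace ?T = Y" using Y openin_subset by auto
  have "\<And>G. G \<in> \<G> \<Longrightarrow> openin X G" using \<G> by blast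
  then have "\<exists>\<V>. (\<forall>V\<in>\<V>. openin ?T V) \<and> \<Union>\<V> = topspace X \<inter> Y \<and>
             (\<forall>V\<in>\<V>. \<exists>G\<in>\<G>. V \<subseteq> G) \<and> locally_finite_in ?T \<V>"
    using pc cov by (intro paracompact_space_subtopology_refinement)
  then obtain \<V> where V_cover: "\<Union>\<V> = topspace X \<inter> Y"
      and V_refines: "\<forall>V\<in>\<V>. \<exists>G\<in>\<G>. V \<subseteq> G" and V_lf: "locally_finite_in ?T \<V>"
    by (elim exE conjE)
  have "\<Union>\<V> = Y" using V_cover tT by simp
  moreover have "\<And>V. V \<in> \<V> \<Longrightarrow> \<exists>G\<in>\<G>. V \<subseteq> G" using V_refines by blast
  ultimately have "\<exists>\<H>. locally_finite_in ?T \<H> \<and> \<Union>\<H> = Y \<and>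
                    (\<forall>H\<in>\<H>. closedin X H \<and> openin X H \<and> (\<exists>G\<in>\<G>. H \<subseteq> G))"
    using comp zd Y V_lf \<G> by (intro locally_finite_clopen_refinement[of X Y \<V> \<G>]) auto
  then obtain \<H> where H_lf: "locally_finite_in ?T \<H>" and H_cover: "\<Union>\<H> = Y"
      and H_clopen: "\<forall>H\<in>\<H>. closedin X H \<and> openin X H \<and> (\<exists>G\<in>\<G>. H \<subseteq> G)"
    by (elim exE conjE)
  have H_clopen_T: "\<forall>H\<in>\<H>. closedin ?T H \<and> openin ?T H"
  proof
    fix H assume H: "H \<in> \<H>"
    then obtain G where "G \<in> \<G>" "H \<subseteq> G" using H_clopen by blast
    then have "H \<subseteq> Y" using \<G> by blast
    moreover have "closedin X H" "openin X H" using H_clopen H by blast+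
    ultimately show "closedin ?T H \<and> openin ?T H"
      using closedin_subset_topspace openin_subtopology_Int[of X H Y] by (simp add: Int_absorb2)
  qed
  have "\<Union>\<H> = topspace ?T" using H_cover tT by simp
  from locally_finite_clopen_cover_disjoint[OF H_lf H_clopen_T this]
  obtain \<D> where D_disj: "pairwise disjnt \<D>" and D_cover: "\<Union>\<D> = topspace ?T"
      and D_sub: "\<forall>D\<in>\<D>. closedin ?T D \<and> openin ?T D \<and> (\<exists>H\<in>\<H>. D \<subseteq> H)"
    by (elim exE conjE)
  have "closedin X D \<and> openin X D \<and> (\<exists>G\<in>\<G>. D \<subseteq> G)" if D: "D \<in> \<D>" for D
  proof -
    obtain H where H: "H \<in> \<H>" "D \<subseteq> H" using D_sub D by blast
    obtain G where G: "G \<in> \<G>" "H \<subseteq> G" using H_clopen H(1) by blast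
    have "closedin ?T D" "openin ?T D" using D_sub D by blast+
    with Y have "closedin X D" "openin X D"
      using \<G>[OF G(1)] H(2) G(2)
      by (meson clopen_in_open_subtopology_inside_closed order_trans)+
    then show ?thesis using G H(2) by blast
  qed
  then show ?thesis using D_disj D_cover tT by (intro exI[of _ \<D>]) auto
qed

lemma clopen_classA_partition:
  assumes comp: "compact_space X" and zd: "zero_dimensional_space X"
    and Y: "openin X Y" and pc: "paracompact_space (subtopology X Y)"
    and loc: "\<And>y. y \<in> Y \<Longrightarrow> \<exists>C. closedin X C \<and> openin X C \<and> y \<in> C \<and> classA (subtopology X C)"
  shows "\<exists>\<D>. pairwise disjnt \<D> \<and> \<Union>\<D> = Y \<and>
              (\<forall>D\<in>\<D>. closedin X D \<and> openin X D \<and> classA (subtopology X D))"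
proof -
  define \<G> where "\<G> = {G. closedin X G \<and> openin X G \<and> G \<subseteq> Y \<and> classA (subtopology X G)}"
  have "\<And>G. G \<in> \<G> \<Longrightarrow> closedin X G \<and> openin X G \<and> G \<subseteq> Y" unfolding \<G>_def by blast
  moreover have "Y \<subseteq> \<Union>\<G>" unfolding \<G>_def using zd Y loc by (rule clopen_classA_cover)
  ultimately have "\<exists>\<D>. pairwise disjnt \<D> \<and> \<Union>\<D> = Y \<and>
              (\<forall>D\<in>\<D>. closedin X D \<and> openin X D \<and> (\<exists>G\<in>\<G>. D \<subseteq> G))"
    by (rule clopen_partition_refinement[OF comp zd Y pc])
  then obtain \<D> where D: "pairwise disjnt \<D>" "\<Union>\<D> = Y"
      "\<forall>D\<in>\<D>. closedin X D \<and> openin X D \<and> (\<exists>G\<in>\<G>. D \<subseteq> G)"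
    by (elim exE conjE)
  have "classA (subtopology X D)" if D_in: "D \<in> \<D>" for D
  proof -
    obtain G where G: "G \<in> \<G>" "D \<subseteq> G" and D_clopen: "closedin X D" "openin X D"
      using D(3) D_in by blast
    have "classA (subtopology X G)" using G(1) unfolding \<G>_def by blast
    from classA_clopen_subset[OF this D_clopen G(2)] show ?thesis .
  qed
  then show ?thesis using D by (intro exI[of _ \<D>]) auto
qed

text \<open>The inductive step of the backward direction: a clopen set \<open>N\<close>, all of whose points except
  possibly \<open>b\<close> have clopen neighbourhoods in \<open>\<A>\<close>, is itself in \<open>\<A>\<close>, by the local-to-global step
  applied to \<open>N - {b}\<close>.\<close>

lemma classA_clopen_insert_point:
  assumes X: "compact_space X" "Hausdorff_space X" "zero_dimensional_space X"
    and hp: "hereditarily_paracompact_space X"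
    and N: "closedin X N" "openin X N" "b \<in> N"
    and loc: "\<And>y. y \<in> N - {b} \<Longrightarrow>
                \<exists>C. closedin X C \<and> openin X C \<and> y \<in> C \<and> classA (subtopology X C)"
  shows "classA (subtopology X N)"
proof -
  have NX: "N \<subseteq> topspace X" using N(2) by (rule openin_subset)
  have "closedin X {b}"
    using Hausdorff_imp_t1_space[OF X(2)] N(3) NX by (blast intro: closedin_t1_singleton)
  then have Y_open: "openin X (N - {b})" using N(2) by (blast intro: openin_diff)
  have "N - {b} \<subseteq> topspace X" using NX by blast
  then have Y_pc: "paracompact_space (subtopology X (N - {b}))"
    using hp unfolding hereditarily_paracompact_space_def by blast
  have "\<exists>\<D>. pairwise disjnt \<D> \<and> \<Union>\<D> = N - {b} \<and>
      (\<forall>D\<in>\<D>. closedin X D \<and> openin X D \<and> classA (subtopology X D))"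
    by (rule clopen_classA_partition[OF X(1,3) Y_open Y_pc loc])
  then obtain \<D> where D: "pairwise disjnt \<D>" "\<Union>\<D> = N - {b}"
      "\<forall>D\<in>\<D>. closedin X D \<and> openin X D \<and> classA (subtopology X D)"
    by (elim exE conjE)
  show "classA (subtopology X N)"
  proof (rule classA_sum_insert_point[where b = b and \<U> = \<D>])
    show "compact_space (subtopology X N)"
      using X(1) N(1) closedin_compact_space compact_space_subtopology by blast
    show "Hausdorff_space (subtopology X N)" using X(2) Hausdorff_space_subtopology by blast
    show "b \<in> topspace (subtopology X N)" using NX N(3) by auto
    show "\<Union>\<D> = topspace (subtopology X N) - {b}" using D(2) NX by auto
    show "pairwise disjnt \<D>" by (rule D(1))
    fix U assume U: "U \<in> \<D>"
    then have UN: "U \<subseteq> N" using D(2) by blast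
    have "openin X U" "classA (subtopology X U)" using D(3) U by blast+
    moreover have "subtopology (subtopology X N) U = subtopology X U"
      using UN by (simp add: subtopology_subtopology inf_absorb2)
    ultimately show "openin (subtopology X N) U \<and> classA (subtopology (subtopology X N) U)"
      using UN openin_subtopology_Int[of X U N] by (simp add: Int_absorb2)
  qed
qed

text \<open>In a compact Hausdorff, scattered, hereditarily paracompact space every point has a clopen
  neighbourhood in \<open>\<A>\<close>: otherwise the set of bad points has an isolated point \<open>b\<close>, and a clopen
  neighbourhood of \<open>b\<close> containing no other bad point is in \<open>\<A>\<close> by the previous lemma.\<close>

lemma classA_clopen_nbhd:
  assumes X: "compact_space X" "Hausdorff_space X" "scattered_space X"
    and hp: "hereditarily_paracompact_space X" and x: "x \<in> topspace X"
  shows "\<exists>C. closedin X C \<and> openin X C \<and> x \<in> C \<and> classA (subtopology X C)"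
proof (rule ccontr)
  let ?good = "\<lambda>x. \<exists>C. closedin X C \<and> openin X C \<and> x \<in> C \<and> classA (subtopology X C)"
  define B where "B = {x \<in> topspace X. \<not> ?good x}"
  have zd: "zero_dimensional_space X" using X by (rule compact_scattered_imp_zero_dimensional)
  assume "\<not> ?good x"
  then have "B \<subseteq> topspace X \<and> B \<noteq> {}" using x unfolding B_def by blast
  then obtain b where b: "b \<in> B" "openin (subtopology X B) {b}"
    using X(3)[unfolded scattered_space_def, rule_format, of B] by blast
  then obtain W where W: "openin X W" "{b} = W \<inter> B" unfolding openin_subtopology by blast
  have b_bad: "\<not> ?good b" using b(1) unfolding B_def by blast
  have "b \<in> W" using W(2) by blast
  then obtain N where N: "closedin X N" "openin X N" "b \<in> N" "N \<subseteq> W"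
    using zd W(1) unfolding zero_dimensional_space_def by blast
  have NX: "N \<subseteq> topspace X" using N(2) by (rule openin_subset)
  have N_good: "\<exists>C. closedin X C \<and> openin X C \<and> y \<in> C \<and> classA (subtopology X C)"
    if y: "y \<in> N - {b}" for y
  proof -
    have "y \<notin> B" using y W(2) N(4) by blast
    then show ?thesis using y NX unfolding B_def by blast
  qed
  have "classA (subtopology X N)"
    using X(1,2) zd hp N(1-3) N_good by (rule classA_clopen_insert_point)
  then show False using b_bad N(1-3) by blast
qed

text \<open>Every compact Hausdorff, scattered, hereditarily paracompact space belongs to \<open>\<A>\<close>: it is
  the disjoint union of clopen members of \<open>\<A>\<close>, i.e. their sum, with nothing to add.\<close>

lemma scattered_hereditarily_paracompact_imp_classA:
  assumes X: "compact_space X" "Hausdorff_space X" "scattered_space X"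
    and hp: "hereditarily_paracompact_space X"
  shows "classA X"
proof -
  have zd: "zero_dimensional_space X" using X by (rule compact_scattered_imp_zero_dimensional)
  have "paracompact_space (subtopology X (topspace X))"
    using hp unfolding hereditarily_paracompact_space_def by blast
  moreover have "\<And>x. x \<in> topspace X \<Longrightarrow>
      \<exists>C. closedin X C \<and> openin X C \<and> x \<in> C \<and> classA (subtopology X C)"
    by (rule classA_clopen_nbhd[OF X hp])
  ultimately have "\<exists>\<D>. pairwise disjnt \<D> \<and> \<Union>\<D> = topspace X \<and>
      (\<forall>D\<in>\<D>. closedin X D \<and> openin X D \<and> classA (subtopology X D))"
    by (rule clopen_classA_partition[OF X(1) zd openin_topspace])
  then obtain \<D> where D: "pairwise disjnt \<D>" "\<Union>\<D> = topspace X"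
      "\<forall>D\<in>\<D>. closedin X D \<and> openin X D \<and> classA (subtopology X D)"
    by (elim exE conjE)
  then show ?thesis
    using X(1,2) by (intro classA.alex[where P = "{}" and \<U> = \<D>]) auto
qed

theorem lemma3:
  fixes X :: "'a topology"
  assumes "compact_space X" and "Hausdorff_space X"
  shows "classA X \<longleftrightarrow> scattered_space X \<and> hereditarily_paracompact_space X"
  using classA_imp_scattered_hereditarily_paracompact
    scattered_hereditarily_paracompact_imp_classA[OF assms] by blast

end
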